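(* Let $G$ be a connected graph with a pair $\{v_i,v_j\}$ of order $h$ and associated vector $S=(s_1,\dots,s_n)^t$. Let $G'$ be a subgraph of $G$ all of whose vertices have the same weight, and let $\tilde G$ be the graph obtained from $G$ by removing all edges of $G'$. If $\tilde G$ is not connected, then $v_i$ and $v_j$ belong to the same connected component of $\tilde G$.
   Context: Graphs are finite, may have multiple edges, no loops. For $G$ with vertices $v_1,\dots,v_n$ let $c_{ij}$ ($i\neq j$) be the number of edges joining $v_i,v_j$, $c_{ii}=-\sum_{j\ne i}c_{ij}$, $M(G)=(c_{ij})$. For an integer $h>0$, a pair $\{v_i,v_j\}$ has order $h$ if there is $S=(s_1,\dots,s_n)^t\in\mathbb{Z}^n$ with $M(G)S=h(e_i-e_j)$ and $\gcd(s_1-s_n,\dots,s_{n-1}-s_n)=1$; the weight of $v_k$ is $s_k$. *)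

theory Defs
  imports Main
begin

text \<open>A multigraph on the vertices v_0,...,v_(n-1) (indices 0..<n) is given by
  edge multiplicities c k l (number of edges joining v_k and v_l).\<close>

definition multigraph :: "nat \<Rightarrow> (nat \<Rightarrow> nat \<Rightarrow> nat) \<Rightarrow> bool" where
  "multigraph n c \<longleftrightarrow> (\<forall>k<n. \<forall>l<n. c k l = c l k) \<and> (\<forall>k<n. c k k = 0)"

definition adj :: "nat \<Rightarrow> (nat \<Rightarrow> nat \<Rightarrow> nat) \<Rightarrow> (nat \<times> nat) set" where
  "adj n c = {(k, l). k < n \<and> l < n \<and> c k l > 0}"

definition connected_mg :: "nat \<Rightarrow> (nat \<Rightarrow> nat \<Rightarrow> nat) \<Rightarrow> bool" where
  "connected_mg n c \<longleftrightarrow> (\<forall>k<n. \<forall>l<n. (k, l) \<in> (adj n c)\<^sup>*)"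

definition same_component :: "nat \<Rightarrow> (nat \<Rightarrow> nat \<Rightarrow> nat) \<Rightarrow> nat \<Rightarrow> nat \<Rightarrow> bool" where
  "same_component n c k l \<longleftrightarrow> k < n \<and> l < n \<and> (k, l) \<in> (adj n c)\<^sup>*"

definition Mmat :: "nat \<Rightarrow> (nat \<Rightarrow> nat \<Rightarrow> nat) \<Rightarrow> nat \<Rightarrow> nat \<Rightarrow> int" where
  "Mmat n c k l = (if k = l then - (\<Sum>m\<in>{0..<n} - {k}. int (c k m)) else int (c k l))"

definition unit_vec :: "nat \<Rightarrow> nat \<Rightarrow> int" where
  "unit_vec i k = (if k = i then 1 else 0)"

definition pair_of_order ::
  "nat \<Rightarrow> (nat \<Rightarrow> nat \<Rightarrow> nat) \<Rightarrow> nat \<Rightarrow> nat \<Rightarrow> int \<Rightarrow> (nat \<Rightarrow> int) \<Rightarrow> bool" where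
  "pair_of_order n c i j h s \<longleftrightarrow>
     i < n \<and> j < n \<and> i \<noteq> j \<and> h > 0 \<and>
     (\<forall>k<n. (\<Sum>l<n. Mmat n c k l * s l) = h * (unit_vec i k - unit_vec j k)) \<and>
     Gcd ((\<lambda>k. s k - s (n - 1)) ` {0..<n - 1}) = 1"

definition subgraph_mg ::
  "nat \<Rightarrow> (nat \<Rightarrow> nat \<Rightarrow> nat) \<Rightarrow> nat set \<Rightarrow> (nat \<Rightarrow> nat \<Rightarrow> nat) \<Rightarrow> bool" where
  "subgraph_mg n c V' c' \<longleftrightarrow> V' \<subseteq> {0..<n} \<and> multigraph n c' \<and>
     (\<forall>k<n. \<forall>l<n. c' k l \<le> c k l) \<and>
     (\<forall>k<n. \<forall>l<n. c' k l > 0 \<longrightarrow> k \<in> V' \<and> l \<in> V')"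

definition remove_edges :: "(nat \<Rightarrow> nat \<Rightarrow> nat) \<Rightarrow> (nat \<Rightarrow> nat \<Rightarrow> nat) \<Rightarrow> nat \<Rightarrow> nat \<Rightarrow> nat" where
  "remove_edges c c' k l = c k l - c' k l"

end

theory Submission
  imports Defs
begin

text \<open>Let C be the connected component of v_i in the graph with the edges of G' removed.
  Row k of M(G) S is the weighted sum of the differences s_l - s_k over the neighbours l of v_k.
  Summing these rows over C, every edge inside C contributes twice with opposite signs, and
  every edge leaving C belongs to G', hence joins two vertices of equal weight and contributes
  nothing. So the sum is 0; on the other hand it equals h if v_j is outside C.\<close>

lemma Mmat_row_eq_sum_weighted_differences:
  assumes "multigraph n c" "k < n"
  shows "(\<Sum>l<n. Mmat n c k l * s l) = (\<Sum>l<n. int (c k l) * (s l - s k))"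
proof -
  have split_k: "{..<n} = insert k ({0..<n} - {k})" using assms(2) by auto
  have "(\<Sum>l<n. Mmat n c k l * s l)
      = Mmat n c k k * s k + (\<Sum>l\<in>{0..<n} - {k}. int (c k l) * s l)"
    by (subst split_k, subst sum.insert) (auto simp: Mmat_def)
  also have "\<dots> = (\<Sum>l\<in>{0..<n} - {k}. int (c k l) * (s l - s k))"
    by (simp add: Mmat_def sum_distrib_right sum_subtractf right_diff_distrib)
  also have "\<dots> = (\<Sum>l<n. int (c k l) * (s l - s k))"
    by (subst split_k, subst sum.insert) auto
  finally show ?thesis .
qed

lemma sum_weighted_differences_symmetric:
  assumes "\<And>k l. k \<in> C \<Longrightarrow> l \<in> C \<Longrightarrow> c k l = c l k"
  shows "(\<Sum>k\<in>C. \<Sum>l\<in>C. int (c k l) * (s l - s k)) = 0"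
proof -
  let ?F = "\<Sum>k\<in>C. \<Sum>l\<in>C. int (c k l) * (s l - s k)"
  have "?F = (\<Sum>l\<in>C. \<Sum>k\<in>C. int (c k l) * (s l - s k))" by (rule sum.swap)
  also have "\<dots> = (\<Sum>l\<in>C. \<Sum>k\<in>C. - (int (c l k) * (s k - s l)))"
    by (intro sum.cong refl) (simp add: assms algebra_simps)
  also have "\<dots> = - ?F" by (simp add: sum_negf)
  finally show ?thesis by simp
qed

lemma sum_weighted_differences_no_outflow:
  assumes "multigraph n c" "C \<subseteq> {..<n}"
    and no_outflow: "\<And>k l. k \<in> C \<Longrightarrow> l < n \<Longrightarrow> l \<notin> C \<Longrightarrow> int (c k l) * (s l - s k) = 0"
  shows "(\<Sum>k\<in>C. \<Sum>l<n. int (c k l) * (s l - s k)) = 0"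
proof -
  have "(\<Sum>k\<in>C. \<Sum>l<n. int (c k l) * (s l - s k)) = (\<Sum>k\<in>C. \<Sum>l\<in>C. int (c k l) * (s l - s k))"
  proof (rule sum.cong[OF refl])
    fix k assume "k \<in> C"
    then have "(\<Sum>l\<in>{..<n} - C. int (c k l) * (s l - s k)) = 0"
      using no_outflow by (intro sum.neutral) blast
    then show "(\<Sum>l<n. int (c k l) * (s l - s k)) = (\<Sum>l\<in>C. int (c k l) * (s l - s k))"
      using sum.subset_diff[OF assms(2), of "\<lambda>l. int (c k l) * (s l - s k)"] by simp
  qed
  also have "\<dots> = 0"
    using assms(1,2) by (intro sum_weighted_differences_symmetric) (auto simp: multigraph_def)
  finally show ?thesis .
qed

lemma no_edge_leaving_reachable_set:
  assumes "(i, k) \<in> (adj n c)\<^sup>*" "k < n" "l < n" "(i, l) \<notin> (adj n c)\<^sup>*"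
  shows "c k l = 0"
proof (rule ccontr)
  assume "c k l \<noteq> 0"
  then have "(k, l) \<in> adj n c" using assms(2,3) by (simp add: adj_def)
  with assms(1,4) show False by (meson rtrancl_into_rtrancl)
qed

lemma sum_unit_vec: "finite C \<Longrightarrow> (\<Sum>k\<in>C. unit_vec i k) = (if i \<in> C then 1 else 0)"
  by (simp add: unit_vec_def)

theorem lemma1p10:
  fixes n :: nat and c c' :: "nat \<Rightarrow> nat \<Rightarrow> nat" and V' :: "nat set"
    and i j :: nat and h :: int and s :: "nat \<Rightarrow> int"
  assumes "multigraph n c"
    and "connected_mg n c"
    and "pair_of_order n c i j h s"
    and "subgraph_mg n c V' c'"
    and "\<forall>k\<in>V'. \<forall>l\<in>V'. s k = s l"
    and "\<not> connected_mg n (remove_edges c c')"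
  shows "same_component n (remove_edges c c') i j"
proof -
  have ij: "i < n" "j < n" and "h > 0"
    and row: "\<And>k. k < n \<Longrightarrow> (\<Sum>l<n. Mmat n c k l * s l) = h * (unit_vec i k - unit_vec j k)"
    using assms(3) unfolding pair_of_order_def by blast+
  define C where "C = {k. k < n \<and> (i, k) \<in> (adj n (remove_edges c c'))\<^sup>*}"
  have C_sub: "C \<subseteq> {..<n}" and "finite C" and "i \<in> C"
    using ij finite_subset by (auto simp: C_def)
  have no_outflow: "int (c k l) * (s l - s k) = 0" if "k \<in> C" "l < n" "l \<notin> C" for k l
  proof (cases "c k l = 0")
    case False
    have "remove_edges c c' k l = 0"
      using that by (intro no_edge_leaving_reachable_set[of i _ n]) (auto simp: C_def)
    with False have "k \<in> V'" "l \<in> V'"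
      using assms(4) that C_sub by (auto simp: subgraph_mg_def remove_edges_def)
    with assms(5) have "s l = s k" by blast
    then show ?thesis by simp
  qed simp
  have "h * ((\<Sum>k\<in>C. unit_vec i k) - (\<Sum>k\<in>C. unit_vec j k))
      = (\<Sum>k\<in>C. \<Sum>l<n. int (c k l) * (s l - s k))"
    using C_sub row Mmat_row_eq_sum_weighted_differences[OF assms(1)]
    by (simp add: sum_distrib_left sum_subtractf right_diff_distrib subset_iff)
  also have "\<dots> = 0"
    using sum_weighted_differences_no_outflow[OF assms(1) C_sub no_outflow] .
  finally have "j \<in> C"
    using \<open>h > 0\<close> \<open>finite C\<close> \<open>i \<in> C\<close> by (simp add: sum_unit_vec split: if_splits)
  with ij show ?thesis by (simp add: same_component_def C_def)
qed

end
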